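(* Let $\epsilon>0$, $\delta\in(0,1)$, and $x\ge 4\epsilon$ with $xn\ge I_{max}$, and let $\mathcal{R}$ consist of $M=\frac{48x}{\epsilon^2}\ln\frac{2n}{\delta}$ independently generated random RR sets. Then with probability at least $1-\delta_2$, every $u\in V$ with $I_u\le(x-2\epsilon)n$ satisfies $\mathcal{F_R}(u)\le x-\epsilon$, where $\delta_2=n\left(\frac{\delta}{2n}\right)^{16}$.
   Context: $G=\langle V,E,w\rangle$ is a network with $n=|V|$ under the Linear Threshold or Independent Cascade model (live-edge form: LT — each node $v$ independently selects at most one incoming live edge, $(u,v)$ with probability $w_{uv}/W_v$ where $W_v=w_v+\sum_u w_{uv}$ includes a self-weight $w_v$; IC — each edge $(u,v)$ live independently with probability $w_{uv}$). $I_u$ is the expected number of nodes reachable from $u$ via live edges and $I_{max}=\max_u I_u$. A random RR set is the set of nodes that can reach a uniformly random node $v\in V$ via live edges in a freshly sampled live-edge graph. $\mathcal{F_R}(u)$ is the fraction of RR sets in $\mathcal{R}$ containing $u$. *)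

theory Defs
  imports "HOL-Probability.Probability"
begin

datatype diffusion_model = LT | IC

text \<open>LT: distribution of the in-edge chosen by node v: Some u with probability
  w u v / W v (u in V), None (no live in-edge) with probability ws v / W v, where
  W v = ws v + sum of w u v over u in V, ws v being the self-weight of v.\<close>
definition W_total :: "'a set \<Rightarrow> ('a \<Rightarrow> 'a \<Rightarrow> real) \<Rightarrow> ('a \<Rightarrow> real) \<Rightarrow> 'a \<Rightarrow> real" where
  "W_total V w ws v = ws v + (\<Sum>u\<in>V. w u v)"

definition lt_choice_pmf :: "'a set \<Rightarrow> ('a \<Rightarrow> 'a \<Rightarrow> real) \<Rightarrow> ('a \<Rightarrow> real) \<Rightarrow> 'a \<Rightarrow> 'a option pmf" where
  "lt_choice_pmf V w ws v = embed_pmf (\<lambda>c. case c of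
      None \<Rightarrow> ws v / W_total V w ws v
    | Some u \<Rightarrow> (if u \<in> V then w u v / W_total V w ws v else 0))"

definition live_edge_pmf :: "diffusion_model \<Rightarrow> 'a set \<Rightarrow> ('a \<Rightarrow> 'a \<Rightarrow> real) \<Rightarrow> ('a \<Rightarrow> real) \<Rightarrow> ('a \<times> 'a) set pmf" where
  "live_edge_pmf m V w ws = (case m of
      LT \<Rightarrow> map_pmf (\<lambda>c. {(u, v). v \<in> V \<and> c v = Some u})
                   (Pi_pmf V None (lt_choice_pmf V w ws))
    | IC \<Rightarrow> map_pmf (\<lambda>b. {e. b e})
                   (Pi_pmf (V \<times> V) False (\<lambda>(u, v). bernoulli_pmf (w u v))))"

definition reach_set :: "'a set \<Rightarrow> ('a \<times> 'a) set \<Rightarrow> 'a \<Rightarrow> 'a set" where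
  "reach_set V E u = {v \<in> V. (u, v) \<in> E\<^sup>*}"

definition influence :: "diffusion_model \<Rightarrow> 'a set \<Rightarrow> ('a \<Rightarrow> 'a \<Rightarrow> real) \<Rightarrow> ('a \<Rightarrow> real) \<Rightarrow> 'a \<Rightarrow> real" where
  "influence m V w ws u =
     measure_pmf.expectation (live_edge_pmf m V w ws) (\<lambda>E. real (card (reach_set V E u)))"

definition I_max :: "diffusion_model \<Rightarrow> 'a set \<Rightarrow> ('a \<Rightarrow> 'a \<Rightarrow> real) \<Rightarrow> ('a \<Rightarrow> real) \<Rightarrow> real" where
  "I_max m V w ws = Max (influence m V w ws ` V)"

definition rr_set_pmf :: "diffusion_model \<Rightarrow> 'a set \<Rightarrow> ('a \<Rightarrow> 'a \<Rightarrow> real) \<Rightarrow> ('a \<Rightarrow> real) \<Rightarrow> 'a set pmf" where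
  "rr_set_pmf m V w ws =
     bind_pmf (pmf_of_set V) (\<lambda>v.
       map_pmf (\<lambda>E. {u \<in> V. (u, v) \<in> E\<^sup>*}) (live_edge_pmf m V w ws))"

definition rr_collection_pmf :: "nat \<Rightarrow> diffusion_model \<Rightarrow> 'a set \<Rightarrow> ('a \<Rightarrow> 'a \<Rightarrow> real) \<Rightarrow> ('a \<Rightarrow> real) \<Rightarrow> (nat \<Rightarrow> 'a set) pmf" where
  "rr_collection_pmf M m V w ws = Pi_pmf {..<M} {} (\<lambda>_. rr_set_pmf m V w ws)"

definition frac_cover :: "nat \<Rightarrow> (nat \<Rightarrow> 'a set) \<Rightarrow> 'a \<Rightarrow> real" where
  "frac_cover M R u = real (card {i \<in> {..<M}. u \<in> R i}) / real M"

definition valid_weights :: "diffusion_model \<Rightarrow> 'a set \<Rightarrow> ('a \<Rightarrow> 'a \<Rightarrow> real) \<Rightarrow> ('a \<Rightarrow> real) \<Rightarrow> bool" where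
  "valid_weights m V w ws = (case m of
      LT \<Rightarrow> (\<forall>u\<in>V. \<forall>v\<in>V. 0 \<le> w u v) \<and> (\<forall>v\<in>V. 0 \<le> ws v \<and> 0 < W_total V w ws v)
    | IC \<Rightarrow> (\<forall>u\<in>V. \<forall>v\<in>V. 0 \<le> w u v \<and> w u v \<le> 1))"

end

theory Submission imports Defs begin

text \<open>
  The RR set contains a fixed node u with probability exactly I_u / n, so the number of
  the M independent RR sets that contain u is binomially distributed with mean at most
  (x - 2\<epsilon>) M whenever I_u \<le> (x - 2\<epsilon>) n. A Chernoff bound with exponent
  s = 2\<epsilon> / (3 (x - 2\<epsilon>)) shows that the count exceeds (x - \<epsilon>) M with probability
  at most (\<delta> / 2n)^16 for the chosen M, and a union bound over the at most n nodes
  concludes.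
\<close>

lemma exp_le_quadratic_two_thirds:
  fixes x :: real
  assumes "0 \<le> x" and "x \<le> 1/2"
  shows "exp x \<le> 1 + x + 2/3 * x\<^sup>2"
proof -
  have geom: "(\<lambda>n. x\<^sup>2 / 2 * (1/4) ^ n) sums (2/3 * x\<^sup>2)"
    using sums_mult[OF geometric_sums, of "1/4" "x\<^sup>2 / 2"] by simp
  have term_le: "inverse (fact (n + 2)) * x ^ (n + 2) \<le> x\<^sup>2 / 2 * (1/4) ^ n" for n
  proof -
    have "(2::nat) * 2 ^ n \<le> fact (n + 2)"
      by (induct n) simp_all
    then have "real ((2::nat) * 2 ^ n) \<le> real (fact (n + 2))"
      by (simp only: of_nat_le_iff)
    then have "(2::real) * 2 ^ n \<le> fact (n + 2)"
      unfolding of_nat_fact by simp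
    then have "inverse (fact (n + 2)) \<le> inverse ((2::real) * 2 ^ n)"
      by (rule le_imp_inverse_le) simp
    then have "inverse (fact (n + 2)) \<le> 1/2 * (1/2::real) ^ n"
      by (simp add: power_inverse[symmetric])
    moreover have "x ^ n \<le> (1/2) ^ n"
      using assms by (intro power_mono) auto
    ultimately have "inverse (fact (n + 2)) * (x ^ n * x\<^sup>2) \<le> 1/2 * (1/2) ^ n * ((1/2) ^ n * x\<^sup>2)"
      using assms by (intro mult_mono) auto
    also have "\<dots> = x\<^sup>2 / 2 * (1/4) ^ n"
      by (simp add: power_mult_distrib[symmetric])
    finally show ?thesis
      unfolding power_add by (simp add: ac_simps del: fact_Suc)
  qed
  have "summable (\<lambda>n. inverse (fact (n + 2)) * x ^ (n + 2))"
    by (rule summable_exp[THEN summable_ignore_initial_segment])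
  then have "(\<Sum>n. inverse (fact (n + 2)) * x ^ (n + 2)) \<le> (\<Sum>n. x\<^sup>2 / 2 * (1/4) ^ n)"
    using term_le sums_summable[OF geom] by (intro suminf_le) auto
  then show ?thesis
    unfolding exp_first_two_terms[of x] sums_unique[OF geom, symmetric] by simp
qed

lemma expectation_if_mem_else_one:
  fixes P :: "'b pmf" and c :: real
  shows "measure_pmf.expectation P (\<lambda>y. if y \<in> A then c else 1) = 1 + measure_pmf.prob P A * (c - 1)"
proof -
  have "(\<lambda>y. if y \<in> A then c else 1) = (\<lambda>y. 1 + (c - 1) * indicator A y)"
    by (auto simp: indicator_def)
  moreover have "integrable (measure_pmf P) (indicator A :: _ \<Rightarrow> real)"
    by (intro measure_pmf.integrable_const_bound[where B=1]) auto
  ultimately show ?thesis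
    by (simp add: mult.commute)
qed

lemma exp_mult_card_filter:
  assumes "finite I"
  shows "exp (s * real (card {i\<in>I. P i})) = (\<Prod>i\<in>I. if P i then exp s else 1)"
proof -
  have "real (card {i\<in>I. P i}) = (\<Sum>i\<in>I. if P i then 1 else 0)"
    using assms by (simp add: sum.If_cases Int_def conj_commute)
  then have "exp (s * real (card {i\<in>I. P i})) = exp (\<Sum>i\<in>I. if P i then s else 0)"
    by (simp add: sum_distrib_left if_distrib cong: if_cong)
  also have "\<dots> = (\<Prod>i\<in>I. exp (if P i then s else 0))"
    by (rule exp_sum[OF assms])
  finally show ?thesis
    by (simp add: if_distrib cong: if_cong)
qed

lemma chernoff_upper_tail_Pi_pmf:
  fixes P :: "'b pmf" and s a :: real
  assumes "s \<ge> 0"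
  shows "measure_pmf.prob (Pi_pmf {..<M} d (\<lambda>_. P)) {R. a \<le> real (card {i\<in>{..<M}. R i \<in> A})}
         \<le> exp (- s * a) * (1 + measure_pmf.prob P A * (exp s - 1)) ^ M"
proof -
  define Q where "Q = Pi_pmf {..<M} d (\<lambda>_. P)"
  define X where "X R = real (card {i\<in>{..<M}. R i \<in> A})" for R :: "nat \<Rightarrow> 'b"
  define f where "f = (\<lambda>y. if y \<in> A then exp s else (1::real))"
  have int_f: "integrable (measure_pmf P) f"
    unfolding f_def by (intro measure_pmf.integrable_const_bound[where B="exp s + 1"]) auto
  have exp_X: "exp (s * X R) = (\<Prod>i\<in>{..<M}. f (R i))" for R
    unfolding X_def f_def by (rule exp_mult_card_filter) simp
  have "measure_pmf.prob Q {R. a \<le> X R} = measure_pmf.expectation Q (indicator {R. a \<le> X R})"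
    by simp
  also have "\<dots> \<le> measure_pmf.expectation Q (\<lambda>R. exp (- s * a) * (\<Prod>i\<in>{..<M}. f (R i)))"
  proof (rule integral_mono)
    show "integrable (measure_pmf Q) (indicator {R. a \<le> X R} :: _ \<Rightarrow> real)"
      by (intro measure_pmf.integrable_const_bound[where B=1]) auto
    show "integrable (measure_pmf Q) (\<lambda>R. exp (- s * a) * (\<Prod>i\<in>{..<M}. f (R i)))"
      unfolding Q_def using int_f by (intro integrable_mult_right integrable_prod_Pi_pmf) auto
    fix R
    have "exp (- s * a) * (\<Prod>i\<in>{..<M}. f (R i)) = exp (s * (X R - a))"
      by (simp add: exp_X[symmetric] exp_add[symmetric] algebra_simps)
    then show "indicator {R. a \<le> X R} R \<le> exp (- s * a) * (\<Prod>i\<in>{..<M}. f (R i))"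
      using assms by (auto simp: indicator_def)
  qed
  also have "\<dots> = exp (- s * a) * (\<Prod>i\<in>{..<M}. measure_pmf.expectation P f)"
    unfolding Q_def using int_f
    by (subst integral_mult_right_zero, subst expectation_prod_Pi_pmf[where f="\<lambda>_. f"])
      (auto simp: f_def)
  also have "\<dots> = exp (- s * a) * (1 + measure_pmf.prob P A * (exp s - 1)) ^ M"
    by (simp add: f_def expectation_if_mem_else_one)
  finally show ?thesis
    unfolding Q_def X_def .
qed

text \<open>
  For s = 2\<epsilon> / (3q) the exponent is at most -10\<epsilon>^2 / (27q), and 48 \<cdot> 10/27 \<ge> 16.
  The library bound exp s \<le> 1 + s + s^2 would only give the constant 12.
\<close>

lemma chernoff_exponent_bound:
  fixes p q \<epsilon> x L :: real
  assumes "\<epsilon> > 0" and "2 * \<epsilon> \<le> q" and "q \<le> x" and "0 \<le> p" and "p \<le> q"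
    and "L \<ge> 0" and M: "real M \<ge> 48 * x / \<epsilon>\<^sup>2 * L"
  defines "s \<equiv> 2 * \<epsilon> / (3 * q)"
  shows "exp (- s * (real M * (q + \<epsilon>))) * (1 + p * (exp s - 1)) ^ M \<le> exp (- 16 * L)"
proof -
  have "q > 0" and "0 \<le> s" and "s \<le> 1/2"
    using assms by (auto simp: s_def field_simps)
  have "(1 + p * (exp s - 1)) ^ M \<le> exp (q * (exp s - 1)) ^ M"
  proof (rule power_mono)
    have "p * (exp s - 1) \<le> q * (exp s - 1)"
      using \<open>0 \<le> s\<close> assms by (intro mult_right_mono) auto
    then show "1 + p * (exp s - 1) \<le> exp (q * (exp s - 1))"
      using exp_ge_add_one_self[of "q * (exp s - 1)"] by linarith
    show "0 \<le> 1 + p * (exp s - 1)"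
      using \<open>0 \<le> s\<close> assms by simp
  qed
  also have "\<dots> = exp (real M * (q * (exp s - 1)))"
    by (simp add: exp_of_nat_mult)
  finally have "exp (- s * (real M * (q + \<epsilon>))) * (1 + p * (exp s - 1)) ^ M
      \<le> exp (- s * (real M * (q + \<epsilon>))) * exp (real M * (q * (exp s - 1)))"
    by (intro mult_left_mono) auto
  also have "\<dots> = exp (real M * (q * (exp s - 1) - s * (q + \<epsilon>)))"
    by (simp add: exp_add[symmetric] algebra_simps)
  finally have moment: "exp (- s * (real M * (q + \<epsilon>))) * (1 + p * (exp s - 1)) ^ M
      \<le> exp (real M * (q * (exp s - 1) - s * (q + \<epsilon>)))" .
  have "q * (exp s - 1) \<le> q * (s + 2/3 * s\<^sup>2)"
    using exp_le_quadratic_two_thirds[OF \<open>0 \<le> s\<close> \<open>s \<le> 1/2\<close>] \<open>q > 0\<close> by simp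
  then have exponent: "q * (exp s - 1) - s * (q + \<epsilon>) \<le> - (10 * \<epsilon>\<^sup>2 / (27 * q))"
    using \<open>q > 0\<close> by (simp add: s_def field_simps power2_eq_square)
  have "16 * L \<le> 480 / 27 * (x / q) * L"
    using assms \<open>q > 0\<close> by (intro mult_right_mono) (auto simp: field_simps)
  also have "\<dots> = 10 * \<epsilon>\<^sup>2 / (27 * q) * (48 * x / \<epsilon>\<^sup>2 * L)"
    using assms \<open>q > 0\<close> by (simp add: field_simps power2_eq_square)
  also have "\<dots> \<le> 10 * \<epsilon>\<^sup>2 / (27 * q) * real M"
    using M \<open>q > 0\<close> by (intro mult_left_mono) auto
  finally have "real M * (q * (exp s - 1) - s * (q + \<epsilon>)) \<le> - 16 * L"
    using mult_left_mono[OF exponent, of "real M"] by (simp add: algebra_simps)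
  then show ?thesis
    using moment by (meson exp_le_cancel_iff order_trans)
qed

lemma prob_sample_count_ge_le:
  fixes P :: "'b pmf" and \<epsilon> x L :: real
  assumes "\<epsilon> > 0" and "x \<ge> 4 * \<epsilon>" and "measure_pmf.prob P A \<le> x - 2 * \<epsilon>"
    and "L \<ge> 0" and "real M \<ge> 48 * x / \<epsilon>\<^sup>2 * L"
  shows "measure_pmf.prob (Pi_pmf {..<M} d (\<lambda>_. P))
           {R. real M * (x - \<epsilon>) \<le> real (card {i\<in>{..<M}. R i \<in> A})} \<le> exp (- 16 * L)"
proof -
  define q where "q = x - 2 * \<epsilon>"
  have "x - \<epsilon> = q + \<epsilon>" and "q > 0"
    using assms by (auto simp: q_def)
  have "measure_pmf.prob (Pi_pmf {..<M} d (\<lambda>_. P))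
           {R. real M * (x - \<epsilon>) \<le> real (card {i\<in>{..<M}. R i \<in> A})}
      \<le> exp (- (2 * \<epsilon> / (3 * q)) * (real M * (q + \<epsilon>)))
        * (1 + measure_pmf.prob P A * (exp (2 * \<epsilon> / (3 * q)) - 1)) ^ M"
    using chernoff_upper_tail_Pi_pmf[where s="2 * \<epsilon> / (3 * q)"] assms \<open>q > 0\<close>
    unfolding \<open>x - \<epsilon> = q + \<epsilon>\<close> by simp
  also have "\<dots> \<le> exp (- 16 * L)"
    using assms by (intro chernoff_exponent_bound) (auto simp: q_def)
  finally show ?thesis .
qed

lemma prob_mem_rr_set:
  assumes "finite V" and "V \<noteq> {}" and "u \<in> V"
  shows "measure_pmf.prob (rr_set_pmf m V w ws) {S. u \<in> S} = influence m V w ws u / real (card V)"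
proof -
  define L where "L = live_edge_pmf m V w ws"
  define reaches where "reaches v = {E. (u, v) \<in> E\<^sup>*}" for v
  have "emeasure (measure_pmf (rr_set_pmf m V w ws)) {S. u \<in> S}
      = (\<integral>\<^sup>+v. emeasure (measure_pmf (map_pmf (\<lambda>E. {u \<in> V. (u, v) \<in> E\<^sup>*}) L)) {S. u \<in> S}
          \<partial>measure_pmf (pmf_of_set V))"
    unfolding rr_set_pmf_def L_def by simp
  also have "\<dots> = (\<integral>\<^sup>+v. ennreal (measure_pmf.prob L (reaches v)) \<partial>measure_pmf (pmf_of_set V))"
    using assms(3) by (intro nn_integral_cong) (simp add: measure_pmf.emeasure_eq_measure vimage_def reaches_def)
  also have "\<dots> = ennreal ((\<Sum>v\<in>V. measure_pmf.prob L (reaches v)) / real (card V))"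
    using assms by (simp add: nn_integral_pmf_of_set sum_ennreal sum_nonneg card_gt_0_iff
        divide_ennreal[symmetric] ennreal_of_nat_eq_real_of_nat[symmetric])
  finally have rr: "measure_pmf.prob (rr_set_pmf m V w ws) {S. u \<in> S}
      = (\<Sum>v\<in>V. measure_pmf.prob L (reaches v)) / real (card V)"
    by (simp add: measure_pmf.emeasure_eq_measure sum_nonneg)
  have "influence m V w ws u = measure_pmf.expectation L (\<lambda>E. \<Sum>v\<in>V. indicator (reaches v) E)"
    unfolding influence_def L_def[symmetric] reach_set_def reaches_def using assms(1)
    by (simp add: indicator_def sum.If_cases Int_def conj_commute)
  also have "\<dots> = (\<Sum>v\<in>V. measure_pmf.prob L (reaches v))"
    by (subst Bochner_Integration.integral_sum)
      (auto intro: measure_pmf.integrable_const_bound[where B=1])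
  finally show ?thesis
    using rr by simp
qed

lemma prob_frac_cover_gt_le:
  assumes "finite V" and "V \<noteq> {}" and "u \<in> V"
    and "\<epsilon> > 0" and "x \<ge> 4 * \<epsilon>"
    and "influence m V w ws u \<le> (x - 2 * \<epsilon>) * real (card V)"
    and "L \<ge> 0" and "real M \<ge> 48 * x / \<epsilon>\<^sup>2 * L"
  shows "measure_pmf.prob (rr_collection_pmf M m V w ws) {R. x - \<epsilon> < frac_cover M R u}
         \<le> exp (- 16 * L)"
proof -
  let ?count_ge = "{R. real M * (x - \<epsilon>) \<le> real (card {i\<in>{..<M}. R i \<in> {S. u \<in> S}})}"
  have "{R. x - \<epsilon> < frac_cover M R u} \<subseteq> ?count_ge"
  proof
    fix R assume "R \<in> {R. x - \<epsilon> < frac_cover M R u}"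
    then have frac: "x - \<epsilon> < real (card {i\<in>{..<M}. u \<in> R i}) / real M"
      by (simp add: frac_cover_def)
    moreover have "x - \<epsilon> > 0"
      using assms by simp
    ultimately have "real M > 0"
      by (cases "M = 0") auto
    with frac show "R \<in> ?count_ge"
      by (simp add: field_simps)
  qed
  then have "measure_pmf.prob (rr_collection_pmf M m V w ws) {R. x - \<epsilon> < frac_cover M R u}
      \<le> measure_pmf.prob (rr_collection_pmf M m V w ws) ?count_ge"
    by (rule measure_pmf.finite_measure_mono) simp
  also have "\<dots> \<le> exp (- 16 * L)"
  proof -
    have "card V > 0"
      using assms by (simp add: card_gt_0_iff)
    then have "measure_pmf.prob (rr_set_pmf m V w ws) {S. u \<in> S} \<le> x - 2 * \<epsilon>"
      using assms by (simp add: prob_mem_rr_set field_simps)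
    then show ?thesis
      unfolding rr_collection_pmf_def using assms by (intro prob_sample_count_ge_le) auto
  qed
  finally show ?thesis .
qed

lemma prob_forall_notin_ge:
  fixes p :: "'b pmf" and B :: "'a \<Rightarrow> 'b set"
  assumes "finite U" and "\<And>u. u \<in> U \<Longrightarrow> measure_pmf.prob p (B u) \<le> b"
  shows "measure_pmf.prob p {y. \<forall>u\<in>U. y \<notin> B u} \<ge> 1 - real (card U) * b"
proof -
  have "measure_pmf.prob p (\<Union>u\<in>U. B u) \<le> (\<Sum>u\<in>U. measure_pmf.prob p (B u))"
    using measure_pmf.finite_measure_subadditive_finite[OF assms(1), of B] by simp
  also have "\<dots> \<le> real (card U) * b"
    using sum_mono[of U _ "\<lambda>_. b"] assms(2) by simp
  finally have "measure_pmf.prob p (\<Union>u\<in>U. B u) \<le> real (card U) * b" .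
  moreover have "{y. \<forall>u\<in>U. y \<notin> B u} = UNIV - (\<Union>u\<in>U. B u)"
    by auto
  ultimately show ?thesis
    using measure_pmf.prob_compl[of "\<Union>u\<in>U. B u"] by simp
qed

theorem lemma6p5:
  fixes m :: diffusion_model and V :: "'a set"
    and w :: "'a \<Rightarrow> 'a \<Rightarrow> real" and ws :: "'a \<Rightarrow> real"
    and \<epsilon> \<delta> x :: real and M :: nat
  assumes "finite V" and "V \<noteq> {}"
    and "valid_weights m V w ws"
    and "\<epsilon> > 0" and "0 < \<delta>" and "\<delta> < 1"
    and "x \<ge> 4 * \<epsilon>"
    and "x * real (card V) \<ge> I_max m V w ws"
    and "M = nat \<lceil>48 * x / \<epsilon>\<^sup>2 * ln (2 * real (card V) / \<delta>)\<rceil>"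
  shows "measure_pmf.prob (rr_collection_pmf M m V w ws)
           {R. \<forall>u\<in>V. influence m V w ws u \<le> (x - 2 * \<epsilon>) * real (card V)
                        \<longrightarrow> frac_cover M R u \<le> x - \<epsilon>}
         \<ge> 1 - real (card V) * (\<delta> / (2 * real (card V))) ^ 16"
proof -
  define n where "n = real (card V)"
  define L where "L = ln (2 * n / \<delta>)"
  define U where "U = {u\<in>V. influence m V w ws u \<le> (x - 2 * \<epsilon>) * n}"
  have "n \<ge> 1"
    using assms by (simp add: n_def Suc_le_eq card_gt_0_iff)
  then have "L \<ge> 0" and "exp (- L) = \<delta> / (2 * n)"
    using assms by (simp_all add: L_def exp_minus)
  then have tail: "exp (- 16 * L) = (\<delta> / (2 * n)) ^ 16"
    using exp_of_nat_mult[of 16 "- L"] by simp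
  have "real M \<ge> 48 * x / \<epsilon>\<^sup>2 * L"
    using assms(9) by (simp add: L_def n_def) linarith
  then have "measure_pmf.prob (rr_collection_pmf M m V w ws) {R. \<forall>u\<in>U. R \<notin> {R. x - \<epsilon> < frac_cover M R u}}
      \<ge> 1 - real (card U) * (\<delta> / (2 * n)) ^ 16"
    using assms \<open>L \<ge> 0\<close> prob_frac_cover_gt_le[of V _ \<epsilon> x m w ws L M] tail
    by (intro prob_forall_notin_ge) (auto simp: U_def n_def)
  moreover have "real (card U) * (\<delta> / (2 * n)) ^ 16 \<le> n * (\<delta> / (2 * n)) ^ 16"
    using assms(1,5) \<open>n \<ge> 1\<close> by (intro mult_right_mono) (auto simp: U_def n_def card_mono)
  moreover have "{R. \<forall>u\<in>U. R \<notin> {R. x - \<epsilon> < frac_cover M R u}}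
      = {R. \<forall>u\<in>V. influence m V w ws u \<le> (x - 2 * \<epsilon>) * n \<longrightarrow> frac_cover M R u \<le> x - \<epsilon>}"
    by (auto simp: U_def not_less)
  ultimately show ?thesis
    unfolding n_def by (metis (no_types, lifting) diff_left_mono order_trans)
qed

end
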